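(* For every $a>0$ and $\alpha>0$, the first Robin eigenvalue of an interval $I_a$ of length $a$ satisfies \[ \frac{2\alpha\pi^2}{a(\pi^2+2\alpha a)}\le\lambda_1(I_a,\alpha)\le\frac{\pi^2}{a^2}\cdot\frac{\pi^2+2a\alpha-\sqrt{64a\alpha+(\pi^2-2a\alpha)^2}}{2(\pi^2-8)}. \]
   Context: For an interval $I_a\subset\mathbb{R}$ of length $a>0$ and $\alpha>0$, $\lambda_1(I_a,\alpha)<\lambda_2(I_a,\alpha)<\cdots$ denote the eigenvalues of the Robin problem $-u''=\lambda u$ on $I_a$ with $\partial_\nu u+\alpha u=0$ at both endpoints ($\partial_\nu$ the outward derivative). Equivalently, $\lambda_1(I_a,\alpha)$ is the unique root in $(0,\pi^2/a^2)$ of $\alpha=\sqrt\lambda\tan(a\sqrt\lambda/2)$. *)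

theory Defs
  imports "HOL-Analysis.Analysis"
begin

text \<open>Robin eigenvalue problem on the interval I_a = [0,a]:
  -u'' = lambda u on [0,a], with outward derivative condition
  d_nu u + alpha u = 0 at both endpoints, i.e.
  -u'(0) + alpha u(0) = 0 and u'(a) + alpha u(a) = 0.
  An eigenvalue is a real lambda admitting a nontrivial twice
  differentiable solution (u' and u'' given explicitly as functions, derivatives
  taken within the closed interval, i.e. one-sided at the endpoints).\<close>

definition robin_eigenvalue :: "real \<Rightarrow> real \<Rightarrow> real \<Rightarrow> bool" where
  "robin_eigenvalue a \<alpha> lam \<longleftrightarrow>
     (\<exists>(u::real \<Rightarrow> real) (u'::real \<Rightarrow> real).
        (\<forall>x\<in>{0..a}. (u has_real_derivative u' x) (at x within {0..a})) \<and>
        (\<forall>x\<in>{0..a}. (u' has_real_derivative (- lam * u x)) (at x within {0..a})) \<and>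
        (\<exists>x\<in>{0..a}. u x \<noteq> 0) \<and>
        - u' 0 + \<alpha> * u 0 = 0 \<and>
        u' a + \<alpha> * u a = 0)"

definition robin_lambda1 :: "real \<Rightarrow> real \<Rightarrow> real" where
  "robin_lambda1 a \<alpha> = Inf {lam. robin_eigenvalue a \<alpha> lam}"

end

theory Submission
  imports Defs
begin

text \<open>Every Robin eigenvalue is \<open>k\<^sup>2\<close> with \<open>k > 0\<close>, and with \<open>\<theta> = k a / 2\<close> either
  \<open>\<alpha> cos \<theta> = k sin \<theta>\<close> (even eigenfunctions) or \<open>k cos \<theta> + \<alpha> sin \<theta> = 0\<close> (odd ones); for
  \<open>\<theta> < \<pi>/2\<close> only the first is possible, and it reads \<open>2 a \<alpha> = 4 \<theta> tan \<theta>\<close>. Both bounds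
  therefore come from rational bounds for \<open>tan\<close> on \<open>[0, \<pi>/2)\<close>, which we read off the
  partial fraction expansion \<open>tan t = \<Sum>\<^sub>k 8 t / ((2k+1)\<^sup>2 \<pi>\<^sup>2 - 4 t\<^sup>2)\<close>, itself the logarithmic
  derivative of the reflection formula for \<open>\<Gamma>\<close>. Comparing the terms with
  \<open>8 t / ((2k+1)\<^sup>2 (\<pi>\<^sup>2 - 4 t\<^sup>2))\<close> and using \<open>\<Sum>\<^sub>k 1/(2k+1)\<^sup>2 = \<pi>\<^sup>2/8\<close> gives the Becker-Stark
  bound \<open>tan t \<le> \<pi>\<^sup>2 t / (\<pi>\<^sup>2 - 4 t\<^sup>2)\<close>, hence the lower bound for \<open>\<lambda>\<^sub>1\<close>; keeping the first term
  and replacing the others by their values at \<open>t = 0\<close> gives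
  \<open>tan t \<ge> 8 t / (\<pi>\<^sup>2 - 4 t\<^sup>2) + (1 - 8/\<pi>\<^sup>2) t\<close>, which for the even root \<open>\<theta> \<in> (0, \<pi>/2)\<close> becomes a
  quadratic inequality in \<open>s = 4 \<theta>\<^sup>2 / \<pi>\<^sup>2 = a\<^sup>2 k\<^sup>2 / \<pi>\<^sup>2\<close> whose smaller root is the upper bound.\<close>

lemma odd_inverse_squares_sums: "(\<lambda>k. 1 / (2 * real k + 1)^2) sums (pi^2 / 8)"
proof -
  define b where "b n = 1 / (1 + real n)^2" for n
  have basel: "b sums (pi^2 / 6)"
    using inverse_squares_sums unfolding b_def by simp
  have "(\<lambda>n. b (2 * n + 1)) = (\<lambda>n. b n / 4)"
    by (auto simp: b_def field_simps power2_eq_square)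
  then have "(\<lambda>n. if odd n then b n else 0) sums (pi^2 / 24)"
    using sums_divide[OF basel, of 4]
    by (subst sums_mono_reindex[of "\<lambda>n. 2 * n + 1", symmetric])
       (auto simp: strict_mono_def elim!: oddE)
  from sums_diff[OF basel this] have "(\<lambda>n. if odd n then 0 else b n) sums (pi^2 / 8)"
    by (simp add: if_distrib[of "\<lambda>t. b _ - t"] cong: if_cong)
  then have "(\<lambda>n. b (2 * n)) sums (pi^2 / 8)"
    by (subst (asm) sums_mono_reindex[of "\<lambda>n. 2 * n", symmetric])
       (auto simp: strict_mono_def elim!: evenE)
  then show ?thesis unfolding b_def by (simp add: add.commute)
qed

lemma Gamma_reflection_real:
  fixes x :: real
  shows "Gamma x * Gamma (1 - x) = pi / sin (pi * x)"
proof -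
  have "complex_of_real (Gamma x * Gamma (1 - x)) = of_real (pi / sin (pi * x))"
    using Gamma_reflection_complex[of "of_real x"]
    by (simp flip: Gamma_complex_of_real sin_of_real)
  then show ?thesis by (simp only: of_real_eq_iff)
qed

lemma Digamma_reflection_real:
  fixes x :: real
  assumes "0 < x" "x < 1"
  shows "Digamma (1 - x) - Digamma x = pi * cot (pi * x)"
proof -
  have sin_pos: "sin (pi * y) > 0" if "0 < y" "y < 1" for y
    using that by (intro sin_gt_zero) auto
  have log_reflection: "ln pi - ln (sin (pi * y)) = ln_Gamma y + ln_Gamma (1 - y)"
    if "y \<in> {0<..<1}" for y
  proof -
    have "Gamma y > 0" "Gamma (1 - y) > 0" using that by auto
    then have "ln (Gamma y) + ln (Gamma (1 - y)) = ln (pi / sin (pi * y))"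
      by (simp add: ln_mult flip: Gamma_reflection_real)
    then show ?thesis using that sin_pos[of y] by (simp add: ln_Gamma_real_pos ln_div)
  qed
  have "((\<lambda>y. ln_Gamma y + ln_Gamma (1 - y)) has_real_derivative Digamma x - Digamma (1 - x)) (at x)"
    using assms by (auto intro!: derivative_eq_intros)
  moreover have "((\<lambda>y. ln_Gamma y + ln_Gamma (1 - y)) has_real_derivative - (pi * cot (pi * x))) (at x)"
    using assms sin_pos[of x]
    by (intro has_field_derivative_transform_within_open[where S = "{0<..<1}", OF _ _ _ log_reflection])
       (auto intro!: derivative_eq_intros simp: cot_def field_simps)
  ultimately show ?thesis by (auto dest: DERIV_unique)
qed

lemma cot_partial_fractions:
  fixes x :: real
  assumes "0 < x" "x < 1"
  shows "(\<lambda>k. 1 / (x + k) - 1 / (1 - x + k)) sums (pi * cot (pi * x))"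
proof -
  let ?d = "\<lambda>z k. inverse (real (Suc k)) - inverse (z + real k)"
  have "summable (?d x)" "summable (?d (1 - x))"
    using assms by (intro summable_Digamma; simp)+
  from sums_diff[OF this(2,1)[THEN summable_sums]]
  have "(\<lambda>k. ?d (1 - x) k - ?d x k) sums (Digamma (1 - x) - Digamma x)"
    by (simp add: Digamma_def)
  also have "(\<lambda>k. ?d (1 - x) k - ?d x k) = (\<lambda>k. 1 / (x + k) - 1 / (1 - x + k))"
    by (simp add: fun_eq_iff divide_inverse)
  finally show ?thesis
    using Digamma_reflection_real[OF assms] by simp
qed

lemma tan_partial_fractions:
  fixes t :: real
  assumes "\<bar>t\<bar> < pi / 2"
  shows "(\<lambda>k. 8 * t / ((2 * k + 1)^2 * pi^2 - 4 * t^2)) sums tan t"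
proof -
  define x where "x = 1 / 2 - t / pi"
  have x: "0 < x" "x < 1" using assms pi_gt_zero by (auto simp: x_def field_simps abs_less_iff)
  have "pi * cot (pi * x) = pi * tan t"
    using tan_cot'[of "pi / 2 - t"] by (simp add: x_def algebra_simps)
  moreover have "1 / (x + k) - 1 / (1 - x + k) = pi * (8 * t / ((2 * real k + 1)^2 * pi^2 - 4 * t^2))"
    for k :: nat
  proof -
    have "(2 * real k + 1) * pi = 2 * (k * pi) + pi" by (simp add: algebra_simps)
    moreover have "0 \<le> k * pi" by simp
    ultimately have "(2 * real k + 1) * pi - 2 * t > 0" "(2 * real k + 1) * pi + 2 * t > 0"
      using assms by (linarith, linarith)
    then show ?thesis by (simp add: x_def field_simps power2_eq_square)
  qed
  ultimately have "(\<lambda>k. pi * (8 * t / ((2 * k + 1)^2 * pi^2 - 4 * t^2))) sums (pi * tan t)"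
    using cot_partial_fractions[OF x] by (simp only:)
  then show ?thesis by (rule iffD1[OF sums_mult_iff[OF pi_neq_zero]])
qed

lemma tan_partial_fraction_denominator_pos:
  fixes t :: real
  assumes "\<bar>t\<bar> < pi / 2"
  shows "(2 * real k + 1)^2 * pi^2 - 4 * t^2 > 0"
proof -
  have "\<bar>2 * t\<bar> < pi" using assms by simp
  then have "\<bar>2 * t\<bar>^2 < pi^2" by (intro power_strict_mono) auto
  also have "pi^2 \<le> (2 * real k + 1)^2 * pi^2" by simp
  finally show ?thesis by (simp add: power_mult_distrib)
qed

lemma tan_upper_Becker_Stark:
  fixes t :: real
  assumes "0 \<le> t" "t < pi / 2"
  shows "tan t \<le> pi^2 * t / (pi^2 - 4 * t^2)"
proof -
  have t: "\<bar>t\<bar> < pi / 2" using assms by simp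
  have gap: "pi^2 - 4 * t^2 > 0" using tan_partial_fraction_denominator_pos[OF t, of 0] by simp
  have termwise: "8 * t / ((2 * real k + 1)^2 * pi^2 - 4 * t^2)
      \<le> 8 * t / (pi^2 - 4 * t^2) * (1 / (2 * real k + 1)^2)" for k
  proof -
    have "4 * t^2 * 1 \<le> 4 * t^2 * (2 * real k + 1)^2"
      by (intro mult_left_mono one_le_power) auto
    then have "(2 * real k + 1)^2 * (pi^2 - 4 * t^2) \<le> (2 * real k + 1)^2 * pi^2 - 4 * t^2"
      by (simp add: algebra_simps)
    then have "8 * t / ((2 * real k + 1)^2 * pi^2 - 4 * t^2)
        \<le> 8 * t / ((2 * real k + 1)^2 * (pi^2 - 4 * t^2))"
      using assms gap tan_partial_fraction_denominator_pos[OF t, of k]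
      by (intro divide_left_mono mult_pos_pos) auto
    then show ?thesis by (simp add: mult.commute)
  qed
  have "tan t \<le> 8 * t / (pi^2 - 4 * t^2) * (pi^2 / 8)"
    using termwise tan_partial_fractions[OF t] sums_mult[OF odd_inverse_squares_sums]
    by (rule sums_le)
  also have "\<dots> = pi^2 * t / (pi^2 - 4 * t^2)" using gap by (simp add: field_simps)
  finally show ?thesis .
qed

lemma tan_lower_Becker_Stark:
  fixes t :: real
  assumes "0 \<le> t" "t < pi / 2"
  shows "8 * t / (pi^2 - 4 * t^2) + (1 - 8 / pi^2) * t \<le> tan t"
proof -
  have t: "\<bar>t\<bar> < pi / 2" using assms by simp
  define first where "first = 8 * t / (pi^2 - 4 * t^2) - 8 * t / pi^2"
  have termwise: "8 * t / pi^2 * (1 / (2 * real k + 1)^2) + (if k = 0 then first else 0)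
      \<le> 8 * t / ((2 * real k + 1)^2 * pi^2 - 4 * t^2)" for k
  proof (cases "k = 0")
    case False
    have "8 * t / ((2 * real k + 1)^2 * pi^2) \<le> 8 * t / ((2 * real k + 1)^2 * pi^2 - 4 * t^2)"
      using assms tan_partial_fraction_denominator_pos[OF t, of k] by (intro divide_left_mono) auto
    with False show ?thesis by (simp add: mult.commute)
  qed (simp add: first_def)
  have "(\<lambda>k. 8 * t / pi^2 * (1 / (2 * real k + 1)^2) + (if k = 0 then first else 0))
      sums (8 * t / pi^2 * (pi^2 / 8) + first)"
    by (rule sums_add[OF sums_mult[OF odd_inverse_squares_sums] sums_single[of 0 "\<lambda>_. first"]])
  from sums_le[OF termwise this tan_partial_fractions[OF t]]
  show ?thesis by (simp add: first_def algebra_simps)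
qed

lemma le_smaller_root_of_quadratic:
  fixes A B C s :: real
  assumes "A > 0" "2 * A * s \<le> B" "A * s^2 - B * s + C \<ge> 0"
  shows "s \<le> (B - sqrt (B^2 - 4 * A * C)) / (2 * A)"
proof -
  have "B^2 - 4 * A * C \<le> (B - 2 * A * s)^2"
    using mult_left_mono[OF assms(3), of "4 * A"] assms(1) by (simp add: algebra_simps power2_eq_square)
  then have "sqrt (B^2 - 4 * A * C) \<le> B - 2 * A * s"
    using assms(2) real_sqrt_le_mono by fastforce
  then show ?thesis using assms(1) by (simp add: pos_le_divide_eq algebra_simps)
qed

lemma mono_on_Icc_if_deriv_nonneg:
  fixes f f' :: "real \<Rightarrow> real"
  assumes "\<And>x. x \<in> {a..b} \<Longrightarrow> (f has_real_derivative f' x) (at x within {a..b})"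
    and "\<And>x. x \<in> {a..b} \<Longrightarrow> f' x \<ge> 0"
  shows "mono_on {a..b} f"
proof (rule mono_onI)
  fix x y assume xy: "x \<in> {a..b}" "y \<in> {a..b}" "x \<le> y"
  have "\<exists>z\<in>{x..y}. f y - f x = (\<lambda>h. f' z * h) (y - x)"
  proof (rule mvt_very_simple[OF \<open>x \<le> y\<close>])
    fix z assume "x \<le> z" "z \<le> y"
    with xy have "(f has_real_derivative f' z) (at z within {x..y})"
      by (intro DERIV_subset[OF assms(1)]) auto
    then show "(f has_derivative (\<lambda>h. f' z * h)) (at z within {x..y})"
      by (simp add: has_field_derivative_def)
  qed
  then obtain z where "z \<in> {x..y}" "f y - f x = f' z * (y - x)" by auto
  moreover have "f' z \<ge> 0" using assms(2) xy \<open>z \<in> {x..y}\<close> by auto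
  ultimately show "f x \<le> f y" using \<open>x \<le> y\<close> by (metis diff_ge_0_iff_ge mult_nonneg_nonneg)
qed

lemma harmonic_oscillator_zero_initial_data:
  fixes u u' :: "real \<Rightarrow> real"
  assumes "lam > 0"
    and du: "\<And>x. x \<in> {a..b} \<Longrightarrow> (u has_real_derivative u' x) (at x within {a..b})"
    and du': "\<And>x. x \<in> {a..b} \<Longrightarrow> (u' has_real_derivative - lam * u x) (at x within {a..b})"
    and "u a = 0" "u' a = 0" "x \<in> {a..b}"
  shows "u x = 0 \<and> u' x = 0"
proof -
  define E where "E y = (u' y)^2 + lam * (u y)^2" for y
  have "\<exists>c. \<forall>y\<in>{a..b}. E y = c"
  proof (rule has_field_derivative_zero_constant)
    fix y assume y: "y \<in> {a..b}"
    show "(E has_real_derivative 0) (at y within {a..b})"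
      unfolding E_def using du[OF y] du'[OF y]
      by (auto intro!: derivative_eq_intros simp: algebra_simps)
  qed simp
  then have "E x = E a" using \<open>x \<in> {a..b}\<close> by fastforce
  also have "\<dots> = 0" using \<open>u a = 0\<close> \<open>u' a = 0\<close> by (simp add: E_def)
  finally have "(u' x)^2 + lam * (u x)^2 = 0" by (simp add: E_def)
  moreover have "(u' x)^2 \<ge> 0" "lam * (u x)^2 \<ge> 0" using \<open>lam > 0\<close> by simp_all
  ultimately have "(u' x)^2 = 0" "lam * (u x)^2 = 0" by linarith+
  then show ?thesis using \<open>lam > 0\<close> by simp
qed

lemma robin_eigenvalue_pos:
  assumes "\<alpha> > 0" "robin_eigenvalue a \<alpha> lam"
  shows "lam > 0"
proof (rule ccontr)
  assume "\<not> lam > 0"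
  obtain u u' where du: "\<And>x. x \<in> {0..a} \<Longrightarrow> (u has_real_derivative u' x) (at x within {0..a})"
    and du': "\<And>x. x \<in> {0..a} \<Longrightarrow> (u' has_real_derivative - lam * u x) (at x within {0..a})"
    and nontrivial: "\<exists>x\<in>{0..a}. u x \<noteq> 0"
    and bc: "- u' 0 + \<alpha> * u 0 = 0" "u' a + \<alpha> * u a = 0"
    using assms(2) unfolding robin_eigenvalue_def by blast
  have a: "0 \<le> a" using nontrivial by auto
  \<comment> \<open>For \<open>lam \<le> 0\<close> the product \<open>u u'\<close> is nondecreasing, but the boundary conditions
    make it \<open>\<ge> 0\<close> at \<open>0\<close> and \<open>\<le> 0\<close> at \<open>a\<close>.\<close>
  define w where "w x = u x * u' x" for x
  have "mono_on {0..a} w"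
  proof (rule mono_on_Icc_if_deriv_nonneg)
    fix x assume x: "x \<in> {0..a}"
    show "(w has_real_derivative (u' x)^2 - lam * (u x)^2) (at x within {0..a})"
      unfolding w_def using du[OF x] du'[OF x]
      by (auto intro!: derivative_eq_intros simp: algebra_simps power2_eq_square)
    have "lam * (u x)^2 \<le> 0" using \<open>\<not> lam > 0\<close> by (intro mult_nonpos_nonneg) auto
    then show "(u' x)^2 - lam * (u x)^2 \<ge> 0" using zero_le_power2[of "u' x"] by linarith
  qed
  moreover have "u' 0 = \<alpha> * u 0" "u' a = - \<alpha> * u a" using bc by linarith+
  then have "w 0 = \<alpha> * (u 0)^2" "w a = - \<alpha> * (u a)^2"
    by (simp_all add: w_def power2_eq_square)
  ultimately have bounds: "\<alpha> * (u 0)^2 \<le> w x \<and> w x \<le> - \<alpha> * (u a)^2" if "x \<in> {0..a}" for x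
    using that a by (metis atLeastAtMost_iff mono_onD order_refl)
  from bounds[of 0] a have "\<alpha> * (u 0)^2 + \<alpha> * (u a)^2 \<le> 0" by auto
  moreover have "\<alpha> * (u 0)^2 \<ge> 0" "\<alpha> * (u a)^2 \<ge> 0" using \<open>\<alpha> > 0\<close> by simp_all
  ultimately have "\<alpha> * (u 0)^2 = 0" "\<alpha> * (u a)^2 = 0" by linarith+
  then have u0: "u 0 = 0" and "u a = 0" using \<open>\<alpha> > 0\<close> by simp_all
  then have w0: "w x = 0" if "x \<in> {0..a}" for x using bounds[OF that] by simp
  have "\<exists>c. \<forall>x\<in>{0..a}. (u x)^2 = c"
  proof (rule has_field_derivative_zero_constant)
    fix x assume x: "x \<in> {0..a}"
    have "((\<lambda>x. (u x)^2) has_real_derivative 2 * w x) (at x within {0..a})"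
      unfolding w_def using du[OF x] by (auto intro!: derivative_eq_intros)
    then show "((\<lambda>x. (u x)^2) has_real_derivative 0) (at x within {0..a})"
      using w0[OF x] by simp
  qed simp
  then have "(u x)^2 = (u 0)^2" if "x \<in> {0..a}" for x using that a by fastforce
  then show False using nontrivial u0 a by auto
qed

lemma robin_eigenvalue_secular_equation:
  assumes "k > 0" "robin_eigenvalue a \<alpha> (k^2)"
  shows "(\<alpha> * cos (k * a / 2) - k * sin (k * a / 2)) * (k * cos (k * a / 2) + \<alpha> * sin (k * a / 2)) = 0"
proof -
  obtain u u' where du: "\<And>x. x \<in> {0..a} \<Longrightarrow> (u has_real_derivative u' x) (at x within {0..a})"
    and du': "\<And>x. x \<in> {0..a} \<Longrightarrow> (u' has_real_derivative - (k^2) * u x) (at x within {0..a})"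
    and nontrivial: "\<exists>x\<in>{0..a}. u x \<noteq> 0"
    and bc: "- u' 0 + \<alpha> * u 0 = 0" "u' a + \<alpha> * u a = 0"
    using assms(2) unfolding robin_eigenvalue_def by blast
  have a: "a \<in> {0..a}" using nontrivial by auto
  \<comment> \<open>\<open>\<phi>\<close> satisfies the equation and the Robin condition at \<open>0\<close>, so \<open>u\<close> is a multiple of it.\<close>
  define \<phi> where "\<phi> x = k * cos (k * x) + \<alpha> * sin (k * x)" for x
  define \<phi>' where "\<phi>' x = k * (\<alpha> * cos (k * x) - k * sin (k * x))" for x
  define D where "D x = k * u x - u 0 * \<phi> x" for x
  define D' where "D' x = k * u' x - u 0 * \<phi>' x" for x
  have dD: "(D has_real_derivative D' x) (at x within {0..a})" if "x \<in> {0..a}" for x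
    unfolding D_def D'_def \<phi>_def \<phi>'_def using du[OF that]
    by (auto intro!: derivative_eq_intros simp: algebra_simps)
  have dD': "(D' has_real_derivative - (k^2) * D x) (at x within {0..a})" if "x \<in> {0..a}" for x
  proof -
    have "(D' has_real_derivative
        k * (- (k^2) * u x) - u 0 * (k * (\<alpha> * (- sin (k * x) * k) - k * (cos (k * x) * k))))
        (at x within {0..a})"
      unfolding D'_def \<phi>'_def using du'[OF that] by (auto intro!: derivative_eq_intros)
    then show ?thesis by (simp add: D_def \<phi>_def algebra_simps power2_eq_square)
  qed
  have "D 0 = 0" "D' 0 = 0" using bc(1) by (simp_all add: D_def D'_def \<phi>_def \<phi>'_def algebra_simps)
  with dD dD' have D_zero: "D x = 0 \<and> D' x = 0" if "x \<in> {0..a}" for x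
    using harmonic_oscillator_zero_initial_data[of "k^2" 0 a D D' x] assms(1) that by simp
  have "u 0 \<noteq> 0"
  proof
    assume "u 0 = 0"
    then have "u x = 0" if "x \<in> {0..a}" for x using D_zero[OF that] assms(1) by (simp add: D_def)
    then show False using nontrivial by blast
  qed
  have "k * (u' a + \<alpha> * u a) = u 0 * (\<phi>' a + \<alpha> * \<phi> a)"
    using D_zero[OF a] by (simp add: D_def D'_def algebra_simps)
  then have "\<phi>' a + \<alpha> * \<phi> a = 0" using bc(2) \<open>u 0 \<noteq> 0\<close> by simp
  define \<theta> where "\<theta> = k * a / 2"
  have "0 = (\<alpha>^2 - k^2) * sin (2 * \<theta>) + 2 * \<alpha> * k * cos (2 * \<theta>)"
    using \<open>\<phi>' a + \<alpha> * \<phi> a = 0\<close>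
    by (simp add: \<phi>_def \<phi>'_def \<theta>_def algebra_simps power2_eq_square)
  also have "\<dots> = 2 * ((\<alpha> * cos \<theta> - k * sin \<theta>) * (k * cos \<theta> + \<alpha> * sin \<theta>))"
    by (simp only: sin_double cos_double) (simp add: algebra_simps power2_eq_square)
  finally show ?thesis by (simp add: \<theta>_def)
qed

lemma robin_eigenvalue_of_even_root:
  assumes "a \<ge> 0" "\<alpha> * cos (k * a / 2) = k * sin (k * a / 2)"
  shows "robin_eigenvalue a \<alpha> (k^2)"
  unfolding robin_eigenvalue_def
proof (intro exI conjI ballI)
  define u where "u x = cos (k * (x - a / 2))" for x
  define u' where "u' x = - k * sin (k * (x - a / 2))" for x
  fix x
  show "(u has_real_derivative u' x) (at x within {0..a})"
    unfolding u_def u'_def by (auto intro!: derivative_eq_intros simp: algebra_simps)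
  show "(u' has_real_derivative - (k^2) * u x) (at x within {0..a})"
    unfolding u_def u'_def by (auto intro!: derivative_eq_intros simp: algebra_simps power2_eq_square)
  show "\<exists>x\<in>{0..a}. u x \<noteq> 0"
    using assms(1) by (intro bexI[of _ "a / 2"]) (auto simp: u_def)
  have "k * (0 - a / 2) = - (k * a / 2)" "k * (a - a / 2) = k * a / 2" by (simp_all add: algebra_simps)
  then show "- u' 0 + \<alpha> * u 0 = 0" "u' a + \<alpha> * u a = 0"
    using assms(2) by (simp_all add: u_def u'_def)
qed

lemma robin_eigenvalue_lower_bound:
  assumes "a > 0" "\<alpha> > 0" "robin_eigenvalue a \<alpha> lam"
  shows "2 * \<alpha> * pi^2 / (a * (pi^2 + 2 * \<alpha> * a)) \<le> lam"
proof -
  define k where "k = sqrt lam"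
  define \<theta> where "\<theta> = k * a / 2"
  have "lam > 0" using robin_eigenvalue_pos assms(2,3) .
  then have k: "k > 0" "lam = k^2" by (auto simp: k_def)
  have \<theta>: "\<theta> > 0" "a = 2 * \<theta> / k" using k assms(1) by (auto simp: \<theta>_def)
  have pos: "pi^2 + 2 * \<alpha> * a > 0" using assms(1,2) by (intro add_pos_pos) simp_all
  then have denom: "a * (pi^2 + 2 * \<alpha> * a) > 0" using assms(1) by simp
  show ?thesis
  proof (cases "\<theta> < pi / 2")
    case True
    have secular: "(\<alpha> * cos \<theta> - k * sin \<theta>) * (k * cos \<theta> + \<alpha> * sin \<theta>) = 0"
      using robin_eigenvalue_secular_equation[of k] k assms(3) by (simp add: \<theta>_def)
    have "cos \<theta> > 0" "sin \<theta> > 0" using \<theta> True by (auto intro!: cos_gt_zero_pi sin_gt_zero)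
    then have "k * cos \<theta> + \<alpha> * sin \<theta> > 0" using k assms(2) by (simp add: add_pos_pos)
    with secular have "\<alpha> * cos \<theta> = k * sin \<theta>" by simp
    with \<open>cos \<theta> > 0\<close> have "\<alpha> = k * tan \<theta>" by (simp add: tan_def field_simps)
    also have "\<dots> \<le> k * (pi^2 * \<theta> / (pi^2 - 4 * \<theta>^2))"
      using tan_upper_Becker_Stark[of \<theta>] \<theta> True k by (intro mult_left_mono) auto
    finally have "\<alpha> * (pi^2 - 4 * \<theta>^2) \<le> k * pi^2 * \<theta>"
      using tan_partial_fraction_denominator_pos[of \<theta> 0] \<theta> True by (simp add: le_divide_eq)
    moreover have "k^2 * (a * (pi^2 + 2 * \<alpha> * a)) = 2 * k * pi^2 * \<theta> + 8 * \<alpha> * \<theta>^2"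
      using k by (simp add: \<theta>(2) field_simps power2_eq_square)
    ultimately have "2 * \<alpha> * pi^2 \<le> k^2 * (a * (pi^2 + 2 * \<alpha> * a))"
      by (simp add: algebra_simps)
    then show ?thesis using denom by (simp add: k(2) pos_divide_le_eq)
  next
    case False
    have "2 * \<alpha> * pi^2 / (a * (pi^2 + 2 * \<alpha> * a)) \<le> 2 * \<alpha> * pi^2 / (a * (2 * \<alpha> * a))"
      using assms(1,2) pos by (intro divide_left_mono mult_left_mono mult_pos_pos) auto
    also have "\<dots> = (pi / a)^2" using assms(1,2) by (simp add: field_simps power2_eq_square)
    also have "\<dots> \<le> k^2"
      using False assms(1) \<theta>(1) by (intro power_mono) (auto simp: \<theta>_def field_simps)
    finally show ?thesis using k(2) by simp
  qed
qed

lemma even_secular_root_exists: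
  assumes "a > 0" "\<alpha> > 0"
  obtains k where "0 < k" "k < pi / a" "\<alpha> * cos (k * a / 2) = k * sin (k * a / 2)"
proof -
  define f where "f k = k * sin (k * a / 2) - \<alpha> * cos (k * a / 2)" for k
  have "f 0 < 0" "f (pi / a) > 0" using assms by (simp_all add: f_def)
  then obtain k where k: "0 \<le> k" "k \<le> pi / a" "f k = 0"
    using IVT'[of f 0 0 "pi / a"] assms by (force simp: f_def intro!: continuous_intros)
  with \<open>f 0 < 0\<close> \<open>f (pi / a) > 0\<close> have "0 < k" "k < pi / a"
    by (auto simp: order.order_iff_strict)
  with k(3) show ?thesis using that by (simp add: f_def)
qed

lemma robin_eigenvalue_upper_bound:
  assumes "a > 0" "\<alpha> > 0"
  obtains lam where "robin_eigenvalue a \<alpha> lam"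
    "lam \<le> pi^2 / a^2 * ((pi^2 + 2 * a * \<alpha> - sqrt (64 * a * \<alpha> + (pi^2 - 2 * a * \<alpha>)^2))
            / (2 * (pi^2 - 8)))"
proof -
  obtain k where k: "0 < k" "k < pi / a" "\<alpha> * cos (k * a / 2) = k * sin (k * a / 2)"
    using even_secular_root_exists[OF assms] .
  define \<theta> where "\<theta> = k * a / 2"
  have \<theta>: "0 < \<theta>" "\<theta> < pi / 2" "k = 2 * \<theta> / a"
    using k(1,2) assms(1) by (auto simp: \<theta>_def field_simps)
  have secular: "\<alpha> * cos \<theta> = k * sin \<theta>" using k(3) by (simp add: \<theta>_def)
  define s where "s = 4 * \<theta>^2 / pi^2"
  define \<beta> where "\<beta> = 2 * a * \<alpha>"
  have s: "0 < s" "s < 1"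
    using \<theta> tan_partial_fraction_denominator_pos[of \<theta> 0] by (auto simp: s_def)
  have "cos \<theta> > 0" using \<theta> by (intro cos_gt_zero_pi) auto
  then have "\<beta> = 4 * \<theta> * tan \<theta>"
    using secular assms(1) by (simp add: \<beta>_def \<theta>(3) tan_def field_simps)
  also have "\<dots> \<ge> 4 * \<theta> * (8 * \<theta> / (pi^2 - 4 * \<theta>^2) + (1 - 8 / pi^2) * \<theta>)"
    using tan_lower_Becker_Stark[of \<theta>] \<theta> by (intro mult_left_mono) auto
  finally have "\<beta> \<ge> 8 * s / (1 - s) + (pi^2 - 8) * s"
    by (simp add: s_def field_simps power2_eq_square)
  then have quadratic: "(pi^2 - 8) * s^2 - (pi^2 + \<beta>) * s + \<beta> \<ge> 0"
    using s by (simp add: field_simps power2_eq_square)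
  have root: "s \<le> ((pi^2 + \<beta>) - sqrt ((pi^2 + \<beta>)^2 - 4 * (pi^2 - 8) * \<beta>)) / (2 * (pi^2 - 8))"
  proof (rule le_smaller_root_of_quadratic[OF _ _ quadratic])
    have "3^2 < pi^2" "pi^2 < 4^2"
      using pi_gt3 pi_less_4 by (intro power_strict_mono; simp)+
    then show "pi^2 - 8 > 0" by simp
    then have "2 * (pi^2 - 8) * s \<le> 2 * (pi^2 - 8) * 1" using s by (intro mult_left_mono) auto
    moreover have "\<beta> > 0" using assms by (simp add: \<beta>_def)
    ultimately show "2 * (pi^2 - 8) * s \<le> pi^2 + \<beta>"
      using \<open>pi^2 < 4^2\<close> by simp
  qed
  have discriminant: "(pi^2 + \<beta>)^2 - 4 * (pi^2 - 8) * \<beta> = 64 * a * \<alpha> + (pi^2 - 2 * a * \<alpha>)^2"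
    by (simp add: \<beta>_def algebra_simps power2_eq_square)
  have "k^2 = pi^2 / a^2 * s"
    using assms(1) by (simp add: \<theta>(3) s_def field_simps power2_eq_square)
  also have "\<dots> \<le> pi^2 / a^2 * ((pi^2 + 2 * a * \<alpha> - sqrt (64 * a * \<alpha> + (pi^2 - 2 * a * \<alpha>)^2))
            / (2 * (pi^2 - 8)))"
    using root unfolding discriminant by (intro mult_left_mono) (simp_all add: \<beta>_def)
  finally have "k^2 \<le> pi^2 / a^2 * ((pi^2 + 2 * a * \<alpha> - sqrt (64 * a * \<alpha> + (pi^2 - 2 * a * \<alpha>)^2))
            / (2 * (pi^2 - 8)))" .
  moreover have "robin_eigenvalue a \<alpha> (k^2)"
    using robin_eigenvalue_of_even_root assms(1) secular by (simp add: \<theta>_def)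
  ultimately show ?thesis using that by blast
qed

theorem propositionA1:
  fixes a \<alpha> :: real
  assumes "a > 0" and "\<alpha> > 0"
  shows "2 * \<alpha> * pi^2 / (a * (pi^2 + 2 * \<alpha> * a)) \<le> robin_lambda1 a \<alpha> \<and>
         robin_lambda1 a \<alpha> \<le> pi^2 / a^2 *
           ((pi^2 + 2 * a * \<alpha> - sqrt (64 * a * \<alpha> + (pi^2 - 2 * a * \<alpha>)^2)) / (2 * (pi^2 - 8)))"
proof -
  let ?spectrum = "{lam. robin_eigenvalue a \<alpha> lam}"
  obtain lam where lam: "lam \<in> ?spectrum"
    "lam \<le> pi^2 / a^2 * ((pi^2 + 2 * a * \<alpha> - sqrt (64 * a * \<alpha> + (pi^2 - 2 * a * \<alpha>)^2))
            / (2 * (pi^2 - 8)))"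
    using robin_eigenvalue_upper_bound[OF assms] by auto
  have lower: "2 * \<alpha> * pi^2 / (a * (pi^2 + 2 * \<alpha> * a)) \<le> mu" if "mu \<in> ?spectrum" for mu
    using robin_eigenvalue_lower_bound[OF assms] that by simp
  then have "bdd_below ?spectrum" by (auto simp: bdd_below_def)
  then have "Inf ?spectrum \<le> lam" by (rule cInf_lower[OF lam(1)])
  moreover have "2 * \<alpha> * pi^2 / (a * (pi^2 + 2 * \<alpha> * a)) \<le> Inf ?spectrum"
    using lam(1) lower by (intro cInf_greatest) auto
  ultimately show ?thesis using lam(2) by (simp add: robin_lambda1_def)
qed

end
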